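(* For every object $V$ of $\mathcal{E}_q^{deg}$, the isotropic functor $iso_V$ is self-dual in $\mathcal{F}_{iso}$: there exists an isomorphism $\gamma:iso_V\xrightarrow{\simeq}D(iso_V)$ which is self-adjoint, i.e. $\gamma=D\gamma\circ\eta_{iso_V}$, where $\eta_F:F\to D^2F$ is the unit of the adjunction between $D$ and $D^{op}$.
   Context: $\mathcal{E}$: all $\mathbb{F}_2$-vector spaces; $(-)^*$ linear duality. $\mathcal{E}_q^{deg}$: objects finite-dimensional quadratic spaces over $\mathbb{F}_2$ (possibly degenerate), morphisms injective linear maps preserving quadratic forms. $\mathrm{Sp}(\mathcal{E}_q^{deg})$: same objects, morphisms spans $[V\leftarrow D\rightarrow W]$ up to iso of $D$, composed by pullback (intersection of images). $\mathcal{F}_{iso}=\mathrm{Func}(\mathrm{Sp}(\mathcal{E}_q^{deg}),\mathcal{E})$. Transposition $tr:\mathrm{Sp}(\mathcal{E}_q^{deg})^{op}\to\mathrm{Sp}(\mathcal{E}_q^{deg})$ sends $[V\leftarrow X\rightarrow W]$ to $[W\leftarrow X\rightarrow V]$; the duality $D:\mathcal{F}_{iso}^{op}\to\mathcal{F}_{iso}$ is $DF=(-)^*\circ F\circ tr^{op}$; $D$ is right adjoint to $D^{op}$ with unit $\eta_F:F\to D^2F$ (the canonical map to the double dual). $Q_V=\mathbb{F}_2[\mathrm{Hom}_{\mathrm{Sp}(\mathcal{E}_q^{deg})}(V,-)]$. Let $(\mathrm{Id}_V)^*\in DQ_V(V)=\mathbb{F}_2[\mathrm{End}(V)]^*$ be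 the linear form with value $1$ on $\mathrm{Id}_V$ and $0$ on every other basis element, and $a_V:Q_V\to DQ_V$ the morphism corresponding to it by the Yoneda lemma. The isotropic functor $iso_V$ is the image of $a_V$. *)

theory Defs
  imports Main "HOL-Library.Z2" "HOL-Library.Function_Algebras"
begin

text \<open>Every finite-dimensional F_2-vector space is
  isomorphic to some F_2^n, which we realise as the functions nat => bit vanishing
  from index n on.  An object of E_q^deg is a pair (n, q) with q a (possibly
  degenerate) quadratic form on F_2^n; this is an equivalent full subcategory.\<close>

type_synonym vec = "nat \<Rightarrow> bit"
type_synonym qspace = "nat \<times> (vec \<Rightarrow> bit)"

definition vecs :: "nat \<Rightarrow> vec set" where
  "vecs n = {x. \<forall>i\<ge>n. x i = 0}"

definition qdim :: "qspace \<Rightarrow> nat" where "qdim V = fst V"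
definition qform :: "qspace \<Rightarrow> vec \<Rightarrow> bit" where "qform V = snd V"
definition carrier_q :: "qspace \<Rightarrow> vec set" where "carrier_q V = vecs (qdim V)"

text \<open>Quadratic form over F_2: q(0) = 0 (i.e. q(a x) = a^2 q(x)) and the polar form
  B(x,y) = q(x+y) + q(x) + q(y) is bilinear (over F_2 additivity in each variable is
  linearity; B is symmetric).  q is taken to vanish off the carrier (normalisation).\<close>
definition is_qspace :: "qspace \<Rightarrow> bool" where
  "is_qspace V \<longleftrightarrow>
     qform V 0 = 0 \<and>
     (\<forall>x y z. x \<in> carrier_q V \<longrightarrow> y \<in> carrier_q V \<longrightarrow> z \<in> carrier_q V \<longrightarrow>
        qform V (x + y + z) + qform V (x + y) + qform V z
        = (qform V (x + z) + qform V x + qform V z) + (qform V (y + z) + qform V y + qform V z)) \<and>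
     (\<forall>x. x \<notin> carrier_q V \<longrightarrow> qform V x = 0)"

definition qobj :: "qspace set" where "qobj = {V. is_qspace V}"

text \<open>A span [V <- D -> W] of injective isometries, up to isomorphism of D, is
  determined by the image of D in V x W, i.e. by its graph R = {(f d, g d)}: a linear
  subspace of V x W on which both projections are injective and q_V(x) = q_W(y).
  Conversely each such R, with the restricted form, is such a span.  Composition by
  pullback is relational composition of graphs, and transposition is converse.\<close>

type_synonym rel = "(vec \<times> vec) set"

definition span_hom :: "qspace \<Rightarrow> qspace \<Rightarrow> rel set" where
  "span_hom V W = {R. R \<subseteq> carrier_q V \<times> carrier_q W \<and> (0, 0) \<in> R \<and>
      (\<forall>a b c d. (a, b) \<in> R \<longrightarrow> (c, d) \<in> R \<longrightarrow> (a + c, b + d) \<in> R) \<and>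
      (\<forall>a b c. (a, b) \<in> R \<longrightarrow> (a, c) \<in> R \<longrightarrow> b = c) \<and>
      (\<forall>a b c. (a, c) \<in> R \<longrightarrow> (b, c) \<in> R \<longrightarrow> a = b) \<and>
      (\<forall>a b. (a, b) \<in> R \<longrightarrow> qform V a = qform W b)}"

definition span_id :: "qspace \<Rightarrow> rel" where
  "span_id V = {(x, x) | x. x \<in> carrier_q V}"

text \<open>Composite of R : V -> W followed by S : W -> X is  R O S : V -> X.
  Transposition of R : V -> W is  converse R : W -> V.\<close>

text \<open>An F_2-vector space is represented by a carrier set inside a type of class
  ab_group_add, closed under addition, containing 0, with x + x = 0 (the scalar
  action of F_2 is then determined).  Linear maps are additive maps between carriers;
  they are compared on carriers only.\<close>

definition f2space :: "'v::ab_group_add set \<Rightarrow> bool" where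
  "f2space S \<longleftrightarrow> 0 \<in> S \<and> (\<forall>x\<in>S. \<forall>y\<in>S. x + y \<in> S) \<and> (\<forall>x\<in>S. x + x = 0)"

definition f2linear :: "'v::ab_group_add set \<Rightarrow> 'w::ab_group_add set \<Rightarrow> ('v \<Rightarrow> 'w) \<Rightarrow> bool" where
  "f2linear S T f \<longleftrightarrow> (\<forall>x\<in>S. f x \<in> T) \<and> (\<forall>x\<in>S. \<forall>y\<in>S. f (x + y) = f x + f y)"

definition is_functor ::
  "(qspace \<Rightarrow> 'v::ab_group_add set) \<Rightarrow> (qspace \<Rightarrow> qspace \<Rightarrow> rel \<Rightarrow> 'v \<Rightarrow> 'v) \<Rightarrow> bool" where
  "is_functor Fo Fm \<longleftrightarrow>
     (\<forall>V\<in>qobj. f2space (Fo V)) \<and>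
     (\<forall>V\<in>qobj. \<forall>W\<in>qobj. \<forall>R\<in>span_hom V W. f2linear (Fo V) (Fo W) (Fm V W R)) \<and>
     (\<forall>V\<in>qobj. \<forall>x\<in>Fo V. Fm V V (span_id V) x = x) \<and>
     (\<forall>V\<in>qobj. \<forall>W\<in>qobj. \<forall>X\<in>qobj. \<forall>R\<in>span_hom V W. \<forall>S\<in>span_hom W X. \<forall>x\<in>Fo V.
        Fm V X (R O S) x = Fm W X S (Fm V W R x))"

text \<open>Natural isomorphisms F => G in F_iso (componentwise linear bijections; their
  inverses are then automatically linear and natural).\<close>
definition is_nat_iso ::
  "(qspace \<Rightarrow> 'v::ab_group_add set) \<Rightarrow> (qspace \<Rightarrow> qspace \<Rightarrow> rel \<Rightarrow> 'v \<Rightarrow> 'v) \<Rightarrow>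
   (qspace \<Rightarrow> 'w::ab_group_add set) \<Rightarrow> (qspace \<Rightarrow> qspace \<Rightarrow> rel \<Rightarrow> 'w \<Rightarrow> 'w) \<Rightarrow>
   (qspace \<Rightarrow> 'v \<Rightarrow> 'w) \<Rightarrow> bool" where
  "is_nat_iso Fo Fm Go Gm \<gamma> \<longleftrightarrow>
     (\<forall>V\<in>qobj. f2linear (Fo V) (Go V) (\<gamma> V) \<and> bij_betw (\<gamma> V) (Fo V) (Go V)) \<and>
     (\<forall>V\<in>qobj. \<forall>W\<in>qobj. \<forall>R\<in>span_hom V W. \<forall>x\<in>Fo V.
        \<gamma> W (Fm V W R x) = Gm V W R (\<gamma> V x))"

definition dual :: "'v::ab_group_add set \<Rightarrow> ('v \<Rightarrow> bit) set" where
  "dual S = {\<phi>. (\<forall>x\<in>S. \<forall>y\<in>S. \<phi> (x + y) = \<phi> x + \<phi> y) \<and> (\<forall>x. x \<notin> S \<longrightarrow> \<phi> x = 0)}"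

definition dualmap :: "'v set \<Rightarrow> ('v \<Rightarrow> 'w) \<Rightarrow> ('w \<Rightarrow> bit) \<Rightarrow> ('v \<Rightarrow> bit)" where
  "dualmap S f \<phi> = (\<lambda>x. if x \<in> S then \<phi> (f x) else 0)"

definition Dobj :: "(qspace \<Rightarrow> 'v::ab_group_add set) \<Rightarrow> qspace \<Rightarrow> ('v \<Rightarrow> bit) set" where
  "Dobj Fo V = dual (Fo V)"

definition Dmor :: "(qspace \<Rightarrow> 'v set) \<Rightarrow> (qspace \<Rightarrow> qspace \<Rightarrow> rel \<Rightarrow> 'v \<Rightarrow> 'v) \<Rightarrow>
    qspace \<Rightarrow> qspace \<Rightarrow> rel \<Rightarrow> ('v \<Rightarrow> bit) \<Rightarrow> ('v \<Rightarrow> bit)" where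
  "Dmor Fo Fm V W R = dualmap (Fo W) (Fm W V (converse R))"

definition Dnat :: "(qspace \<Rightarrow> 'v set) \<Rightarrow> (qspace \<Rightarrow> 'v \<Rightarrow> 'w) \<Rightarrow> qspace \<Rightarrow> ('w \<Rightarrow> bit) \<Rightarrow> ('v \<Rightarrow> bit)" where
  "Dnat Fo \<gamma> V = dualmap (Fo V) (\<gamma> V)"

definition eta :: "(qspace \<Rightarrow> 'v::ab_group_add set) \<Rightarrow> qspace \<Rightarrow> 'v \<Rightarrow> (('v \<Rightarrow> bit) \<Rightarrow> bit)" where
  "eta Fo V x = (\<lambda>\<phi>. if \<phi> \<in> dual (Fo V) then \<phi> x else 0)"

text \<open>Q_V(W) = F_2[Hom(V,W)], as finitely supported functions Hom(V,W) -> F_2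
  (Hom(V,W) is finite); Q_V(R) is the linear extension of f |-> R o f.\<close>
definition Qobj :: "qspace \<Rightarrow> qspace \<Rightarrow> (rel \<Rightarrow> bit) set" where
  "Qobj V W = {c. \<forall>f. f \<notin> span_hom V W \<longrightarrow> c f = 0}"

definition Qmor :: "qspace \<Rightarrow> qspace \<Rightarrow> qspace \<Rightarrow> rel \<Rightarrow> (rel \<Rightarrow> bit) \<Rightarrow> (rel \<Rightarrow> bit)" where
  "Qmor V W X R c = (\<lambda>g. \<Sum>f\<in>{f \<in> span_hom V W. f O R = g}. c f)"

definition DQobj :: "qspace \<Rightarrow> qspace \<Rightarrow> ((rel \<Rightarrow> bit) \<Rightarrow> bit) set" where
  "DQobj V = Dobj (Qobj V)"

definition DQmor :: "qspace \<Rightarrow> qspace \<Rightarrow> qspace \<Rightarrow> rel \<Rightarrow> ((rel \<Rightarrow> bit) \<Rightarrow> bit) \<Rightarrow> ((rel \<Rightarrow> bit) \<Rightarrow> bit)" where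
  "DQmor V = Dmor (Qobj V) (Qmor V)"

definition id_star :: "qspace \<Rightarrow> (rel \<Rightarrow> bit) \<Rightarrow> bit" where
  "id_star V = (\<lambda>c. if c \<in> Qobj V V then c (span_id V) else 0)"

text \<open>a_V : Q_V -> DQ_V, the morphism corresponding to (Id_V)^* by Yoneda:
  on the basis element f in Hom(V,W) it is DQ_V(f)((Id_V)^*), extended linearly.\<close>
definition a_map :: "qspace \<Rightarrow> qspace \<Rightarrow> (rel \<Rightarrow> bit) \<Rightarrow> ((rel \<Rightarrow> bit) \<Rightarrow> bit)" where
  "a_map V W c = (\<Sum>f\<in>span_hom V W. (\<lambda>x. c f * DQmor V V W f (id_star V) x))"

text \<open>iso_V = image of a_V, a subfunctor of DQ_V.\<close>
definition iso_obj :: "qspace \<Rightarrow> qspace \<Rightarrow> ((rel \<Rightarrow> bit) \<Rightarrow> bit) set" where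
  "iso_obj V W = a_map V W ` Qobj V W"

definition iso_mor :: "qspace \<Rightarrow> qspace \<Rightarrow> qspace \<Rightarrow> rel \<Rightarrow> ((rel \<Rightarrow> bit) \<Rightarrow> bit) \<Rightarrow> ((rel \<Rightarrow> bit) \<Rightarrow> bit)" where
  "iso_mor V = DQmor V"

end

(*
  Unwinding the Yoneda correspondence, a_V(c)(y) is the bilinear form
  <c, y> = sum of c(f) y(h) over h o f^T = Id_V on Q_V(W) = F_2[Hom(V, W)].
  The relation h o f^T = Id_V forces h = f and f to have apex V, i.e. to be an
  injective isometry V -> W.  Hence <-, -> is the dot product of the coordinates
  indexed by these embeddings, iso_V(W) is free on the images a_V(f) of the
  embeddings, and the dot product of coordinates gives gamma.  It is symmetric,
  hence self-adjoint, and bijective onto the dual because the a_V(f) form a basis.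
  It is natural because <-, -> makes Q_V(R) and Q_V(R^T) adjoint, which only
  uses (h o R) o f^T = h o (f o R^T)^T.
*)
theory Submission
  imports Defs "HOL-Library.Indicator_Function"
begin

(* Keep sums and products in bit in ring form instead of xor/and. *)
declare mult_bit_eq_and [simp del] add_bit_eq_xor [simp del]

lemma sum_fun_apply: "(\<Sum>i\<in>A. g i) x = (\<Sum>i\<in>A. g i x)"
  by (induction A rule: infinite_finite_induct) auto

lemma bit_add_self [simp]: "(b::bit) + b = 0"
  by (cases b) auto

lemma bit_fun_add_self [simp]: "(\<phi>::'a \<Rightarrow> bit) + \<phi> = 0"
  by (simp add: fun_eq_iff)

lemma finite_vecs: "finite (vecs n)"
proof -
  have "finite (UNIV :: bit set)"
    by (metis bit.exhaust finite.simps insertCI subsetI finite_subset)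
  then show ?thesis
    using finite_set_of_finite_funs[of "{..<n}" "UNIV :: bit set" 0]
    by (simp add: vecs_def not_less)
qed

lemma finite_span_hom: "finite (span_hom V W)"
proof (rule finite_subset)
  show "span_hom V W \<subseteq> Pow (carrier_q V \<times> carrier_q W)"
    by (auto simp: span_hom_def)
qed (simp add: carrier_q_def finite_vecs)

lemma relcomp_span_hom: "R \<in> span_hom V W \<Longrightarrow> S \<in> span_hom W X \<Longrightarrow> R O S \<in> span_hom V X"
  unfolding span_hom_def by (auto simp: relcomp_unfold) metis+

lemma converse_span_hom: "R \<in> span_hom V W \<Longrightarrow> converse R \<in> span_hom W V"
  unfolding span_hom_def by auto

lemma span_homD:
  assumes "R \<in> span_hom V W"
  shows "R \<subseteq> carrier_q V \<times> carrier_q W"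
    and "(a, b) \<in> R \<Longrightarrow> (a, c) \<in> R \<Longrightarrow> b = c"
    and "(a, c) \<in> R \<Longrightarrow> (b, c) \<in> R \<Longrightarrow> a = b"
  using assms unfolding span_hom_def by blast+

(* Spans with apex V, i.e. injective isometries V -> W. *)
definition emb_hom :: "qspace \<Rightarrow> qspace \<Rightarrow> rel set" where
  "emb_hom V W = {f \<in> span_hom V W. Domain f = carrier_q V}"

lemma finite_emb_hom: "finite (emb_hom V W)"
  by (simp add: emb_hom_def finite_span_hom)

lemma relcomp_converse_eq_span_id_iff:
  assumes f: "f \<in> span_hom V W" and h: "h \<in> span_hom V W"
  shows "h O converse f = span_id V \<longleftrightarrow> h = f \<and> f \<in> emb_hom V W"
proof
  assume id: "h O converse f = span_id V"
  have common: "\<exists>b. (a, b) \<in> h \<and> (a, b) \<in> f" if "a \<in> carrier_q V" for a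
  proof -
    have "(a, a) \<in> h O converse f"
      using that by (simp add: id span_id_def)
    then show ?thesis by blast
  qed
  have "f \<subseteq> h"
    using common span_homD[OF f] by fast
  moreover have "h \<subseteq> f"
    using common span_homD[OF h] by fast
  moreover have "Domain f = carrier_q V"
    using common span_homD(1)[OF f] by fast
  ultimately show "h = f \<and> f \<in> emb_hom V W"
    using f by (auto simp: emb_hom_def)
next
  assume "h = f \<and> f \<in> emb_hom V W"
  then show "h O converse f = span_id V"
    using span_homD[OF f] by (auto simp: emb_hom_def span_id_def)
qed

definition qpair :: "qspace \<Rightarrow> qspace \<Rightarrow> (rel \<Rightarrow> bit) \<Rightarrow> (rel \<Rightarrow> bit) \<Rightarrow> bit" where
  "qpair V W c y = (\<Sum>f\<in>emb_hom V W. c f * y f)"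

lemma qpair_sym: "qpair V W c y = qpair V W y c"
  by (simp add: qpair_def mult.commute)

lemma qpair_add_left: "qpair V W (c + c') y = qpair V W c y + qpair V W c' y"
  by (simp add: qpair_def distrib_right sum.distrib)

lemma qpair_add_right: "qpair V W c (y + y') = qpair V W c y + qpair V W c y'"
  by (simp add: qpair_def distrib_left sum.distrib)

lemma qpair_cong:
  "(\<And>f. f \<in> emb_hom V W \<Longrightarrow> c f = c' f) \<Longrightarrow> qpair V W c y = qpair V W c' y"
  by (simp add: qpair_def)

lemma qpair_trace_form:
  "qpair V W c y = (\<Sum>f\<in>span_hom V W. \<Sum>h\<in>span_hom V W.
      c f * y h * of_bool (h O converse f = span_id V))"
proof -
  have "(\<Sum>h\<in>span_hom V W. c f * y h * of_bool (h O converse f = span_id V))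
        = (if f \<in> emb_hom V W then c f * y f else 0)" if "f \<in> span_hom V W" for f
    using that by (simp add: relcomp_converse_eq_span_id_iff finite_span_hom cong: if_cong)
  then show ?thesis
    by (simp add: qpair_def emb_hom_def sum.inter_filter[OF finite_span_hom])
qed

lemma sum_mult_sum_fibres:
  fixes G :: "'b \<Rightarrow> 'c::comm_semiring_1"
  assumes "finite S" "finite T" "k ` S \<subseteq> T"
  shows "(\<Sum>g\<in>T. G g * (\<Sum>h\<in>{h \<in> S. k h = g}. y h)) = (\<Sum>h\<in>S. G (k h) * y h)"
proof -
  have "(\<Sum>g\<in>T. G g * (\<Sum>h\<in>{h \<in> S. k h = g}. y h))
        = (\<Sum>g\<in>T. \<Sum>h\<in>{h \<in> S. k h = g}. G (k h) * y h)"
    by (simp add: sum_distrib_left)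
  also have "\<dots> = (\<Sum>h\<in>S. G (k h) * y h)"
    by (rule sum.group[OF assms])
  finally show ?thesis .
qed

lemma qpair_Qmor_adjoint:
  assumes R: "R \<in> span_hom W X"
  shows "qpair V X x (Qmor V W X R y) = qpair V W (Qmor V X W (converse R) x) y"
proof -
  let ?tr = "\<lambda>f h. of_bool (h O converse f = span_id V) :: bit"
  have tr_comp: "?tr f (h O R) = ?tr (f O converse R) h" for f h
    by (simp add: converse_relcomp O_assoc)
  have fin: "finite (span_hom V W)" "finite (span_hom V X)"
    by (rule finite_span_hom)+
  have comp_R: "(\<lambda>h. h O R) ` span_hom V W \<subseteq> span_hom V X"
    using R relcomp_span_hom by blast
  have comp_R': "(\<lambda>f. f O converse R) ` span_hom V X \<subseteq> span_hom V W"
    using converse_span_hom[OF R] relcomp_span_hom by blast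
  have "qpair V X x (Qmor V W X R y)
     = (\<Sum>f\<in>span_hom V X. \<Sum>g\<in>span_hom V X. (x f * ?tr f g) * (\<Sum>h\<in>{h \<in> span_hom V W. h O R = g}. y h))"
    unfolding qpair_trace_form Qmor_def by (simp add: ac_simps)
  also have "\<dots> = (\<Sum>f\<in>span_hom V X. \<Sum>h\<in>span_hom V W. (x f * ?tr f (h O R)) * y h)"
    by (intro sum.cong refl sum_mult_sum_fibres[OF fin comp_R])
  also have "\<dots> = (\<Sum>h\<in>span_hom V W. \<Sum>f\<in>span_hom V X. (y h * ?tr (f O converse R) h) * x f)"
    by (subst sum.swap) (simp add: tr_comp ac_simps)
  also have "\<dots> = (\<Sum>h\<in>span_hom V W. \<Sum>f'\<in>span_hom V W.
      (y h * ?tr f' h) * (\<Sum>f\<in>{f \<in> span_hom V X. f O converse R = f'}. x f))"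
    by (intro sum.cong refl sum_mult_sum_fibres[OF fin(2,1) comp_R', symmetric])
  also have "\<dots> = qpair V W (Qmor V X W (converse R) x) y"
    unfolding qpair_trace_form Qmor_def by (subst sum.swap) (simp add: ac_simps)
  finally show ?thesis .
qed

lemma Qmor_in_Qobj:
  assumes "R \<in> span_hom W X"
  shows "Qmor V W X R y \<in> Qobj V X"
proof -
  have "{f \<in> span_hom V W. f O R = g} = {}" if "g \<notin> span_hom V X" for g
    using that relcomp_span_hom[OF _ assms] by blast
  then show ?thesis
    unfolding Qobj_def Qmor_def by (simp del: Collect_empty_eq)
qed

lemma indicator_in_Qobj: "f \<in> span_hom V W \<Longrightarrow> indicator {f} \<in> Qobj V W"
  by (auto simp: Qobj_def indicator_def)

lemma DQmor_id_star:
  assumes f: "f \<in> span_hom V W"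
  shows "DQmor V V W f (id_star V) y
         = (if y \<in> Qobj V W then y f * of_bool (f \<in> emb_hom V W) else 0)"
proof -
  have "Qmor V W V (converse f) y (span_id V)
        = (\<Sum>h\<in>span_hom V W. y h * of_bool (h O converse f = span_id V))"
    unfolding Qmor_def by (auto simp: sum.inter_filter[OF finite_span_hom] intro: sum.cong)
  also have "\<dots> = y f * of_bool (f \<in> emb_hom V W)"
    using f by (simp add: relcomp_converse_eq_span_id_iff finite_span_hom cong: if_cong)
  finally show ?thesis
    using Qmor_in_Qobj[OF converse_span_hom[OF f]]
    by (simp add: DQmor_def Dmor_def dualmap_def id_star_def)
qed

lemma a_map_apply: "a_map V W c y = (if y \<in> Qobj V W then qpair V W c y else 0)"
proof -
  have "a_map V W c y = (\<Sum>f\<in>span_hom V W. c f * DQmor V V W f (id_star V) y)"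
    by (simp add: a_map_def sum_fun_apply)
  also have "\<dots> = (if y \<in> Qobj V W then
      (\<Sum>f\<in>span_hom V W. if f \<in> emb_hom V W then c f * y f else 0) else 0)"
    by (auto simp: DQmor_id_star intro: sum.cong)
  also have "\<dots> = (if y \<in> Qobj V W then qpair V W c y else 0)"
    by (simp add: qpair_def emb_hom_def sum.inter_filter[OF finite_span_hom])
  finally show ?thesis .
qed

lemma a_map_zero: "a_map V W 0 = 0"
  by (simp add: fun_eq_iff a_map_apply qpair_def)

lemma a_map_add: "a_map V W (c + c') = a_map V W c + a_map V W c'"
  by (simp add: fun_eq_iff a_map_apply qpair_add_left)

lemma a_map_cong:
  "(\<And>f. f \<in> emb_hom V W \<Longrightarrow> c f = c' f) \<Longrightarrow> a_map V W c = a_map V W c'"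
  by (simp add: fun_eq_iff a_map_apply cong: qpair_cong)

lemma DQmor_a_map:
  assumes R: "R \<in> span_hom W X"
  shows "DQmor V W X R (a_map V W c) = a_map V X (Qmor V W X R c)"
proof
  fix x
  show "DQmor V W X R (a_map V W c) x = a_map V X (Qmor V W X R c) x"
  proof (cases "x \<in> Qobj V X")
    case True
    have "DQmor V W X R (a_map V W c) x = qpair V W (Qmor V X W (converse R) x) c"
      using True Qmor_in_Qobj[OF converse_span_hom[OF R]]
      by (simp add: DQmor_def Dmor_def dualmap_def a_map_apply qpair_sym)
    also have "\<dots> = a_map V X (Qmor V W X R c) x"
      using True by (simp add: a_map_apply qpair_Qmor_adjoint[OF R] qpair_sym)
    finally show ?thesis .
  qed (simp add: DQmor_def Dmor_def dualmap_def a_map_apply)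
qed

lemma iso_objI: "a_map V W c \<in> iso_obj V W"
proof -
  have "a_map V W c = a_map V W (\<lambda>f. if f \<in> emb_hom V W then c f else 0)"
    by (rule a_map_cong) simp
  moreover have "(\<lambda>f. if f \<in> emb_hom V W then c f else 0) \<in> Qobj V W"
    by (simp add: Qobj_def emb_hom_def)
  ultimately show ?thesis
    unfolding iso_obj_def by blast
qed

lemma iso_objE:
  assumes "\<psi> \<in> iso_obj V W"
  obtains x where "x \<in> Qobj V W" "\<psi> = a_map V W x"
  using assms unfolding iso_obj_def by blast

lemma iso_obj_vanishes: "\<psi> \<in> iso_obj V W \<Longrightarrow> y \<notin> Qobj V W \<Longrightarrow> \<psi> y = 0"
  by (auto elim: iso_objE simp: a_map_apply)

lemma f2space_iso_obj: "f2space (iso_obj V W)"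
proof -
  have "\<psi> + \<psi>' \<in> iso_obj V W" if "\<psi> \<in> iso_obj V W" "\<psi>' \<in> iso_obj V W" for \<psi> \<psi>'
    using that by (auto elim!: iso_objE simp flip: a_map_add intro: iso_objI)
  then show ?thesis
    using iso_objI[of V W 0] by (simp add: f2space_def a_map_zero)
qed

lemma dual_zero:
  assumes "f2space S" "\<phi> \<in> dual S"
  shows "\<phi> 0 = (0::bit)"
proof -
  have "0 \<in> S"
    using assms(1) by (simp add: f2space_def)
  then have "\<phi> (0 + 0) = \<phi> 0 + \<phi> 0"
    using assms(2) by (simp only: dual_def mem_Collect_eq)
  then have "\<phi> 0 = \<phi> 0 + \<phi> 0"
    by simp
  then show ?thesis by simp
qed

lemma dual_sum:
  fixes \<phi> :: "'v::ab_group_add \<Rightarrow> bit"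
  assumes S: "f2space S" and \<phi>: "\<phi> \<in> dual S"
    and "finite I" and "\<And>i. i \<in> I \<Longrightarrow> v i \<in> S"
  shows "\<phi> (\<Sum>i\<in>I. v i) = (\<Sum>i\<in>I. \<phi> (v i))"
  using assms(3,4)
proof (induction I rule: finite_induct)
  case empty
  show ?case using dual_zero[OF S \<phi>] by simp
next
  case (insert i I)
  have "(\<Sum>i\<in>I. v i) \<in> S"
    using S insert.prems by (induction I rule: infinite_finite_induct) (auto simp: f2space_def)
  then show ?case
    using insert \<phi> by (simp add: dual_def)
qed

(* Coordinates of iso_V(W) in the basis a_V(indicator {f}), f \<in> emb_hom V W. *)
definition iso_coord :: "qspace \<Rightarrow> qspace \<Rightarrow> ((rel \<Rightarrow> bit) \<Rightarrow> bit) \<Rightarrow> rel \<Rightarrow> bit" where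
  "iso_coord V W \<phi> f = (if f \<in> emb_hom V W then \<phi> (indicator {f}) else 0)"

lemma qpair_indicator: "f \<in> emb_hom V W \<Longrightarrow> qpair V W c (indicator {f}) = c f"
  by (simp add: qpair_def indicator_def of_bool_def finite_emb_hom if_distrib cong: if_cong)

lemma iso_coord_a_map: "f \<in> emb_hom V W \<Longrightarrow> iso_coord V W (a_map V W c) f = c f"
  using indicator_in_Qobj[of f V W]
  by (simp add: iso_coord_def a_map_apply qpair_indicator emb_hom_def)

lemma a_map_iso_coord: "\<psi> \<in> iso_obj V W \<Longrightarrow> a_map V W (iso_coord V W \<psi>) = \<psi>"
  by (auto elim!: iso_objE intro: a_map_cong simp: iso_coord_a_map)

lemma iso_coord_add: "iso_coord V W (\<phi> + \<psi>) = iso_coord V W \<phi> + iso_coord V W \<psi>"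
  by (simp add: fun_eq_iff iso_coord_def)

lemma dual_iso_obj_a_map:
  assumes \<theta>: "\<theta> \<in> dual (iso_obj V W)"
  shows "\<theta> (a_map V W c) = qpair V W c (\<lambda>f. \<theta> (a_map V W (indicator {f})))"
proof -
  define S where "S = {f \<in> emb_hom V W. c f = 1}"
  have fin: "finite S"
    by (simp add: S_def finite_emb_hom)
  have "a_map V W c = a_map V W (\<Sum>f\<in>S. indicator {f})"
  proof (rule a_map_cong)
    fix f assume "f \<in> emb_hom V W"
    then show "c f = (\<Sum>g\<in>S. indicator {g}) f"
      by (cases "c f") (simp_all add: sum_fun_apply fin indicator_def of_bool_def S_def sum.delta' finite_emb_hom)
  qed
  also have "\<dots> = (\<Sum>f\<in>S. a_map V W (indicator {f}))"
    using sum_comp_morphism[of "a_map V W" "\<lambda>f. indicator {f}" S, OF a_map_zero a_map_add]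
    by (simp add: o_def)
  finally have "\<theta> (a_map V W c) = (\<Sum>f\<in>S. \<theta> (a_map V W (indicator {f})))"
    using dual_sum[OF f2space_iso_obj \<theta> fin] iso_objI by simp
  also have "\<dots> = qpair V W c (\<lambda>f. \<theta> (a_map V W (indicator {f})))"
    unfolding S_def qpair_def sum.inter_filter[OF finite_emb_hom]
    by (intro sum.cong refl) (cases "c f"; simp)
  finally show ?thesis .
qed

(* On a_V(c) and a_V(x) this is qpair c x; coordinates avoid choosing preimages. *)
definition iso_self_duality ::
    "qspace \<Rightarrow> qspace \<Rightarrow> ((rel \<Rightarrow> bit) \<Rightarrow> bit) \<Rightarrow> ((rel \<Rightarrow> bit) \<Rightarrow> bit) \<Rightarrow> bit" where
  "iso_self_duality V W \<phi> \<psi> =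
     (if \<psi> \<in> iso_obj V W then qpair V W (iso_coord V W \<phi>) (iso_coord V W \<psi>) else 0)"

lemma iso_self_duality_a_map:
  assumes "\<phi> \<in> iso_obj V W" "x \<in> Qobj V W"
  shows "iso_self_duality V W \<phi> (a_map V W x) = \<phi> x"
proof -
  have "iso_self_duality V W \<phi> (a_map V W x) = qpair V W (iso_coord V W (a_map V W x)) (iso_coord V W \<phi>)"
    by (simp add: iso_self_duality_def iso_objI qpair_sym[of V W "iso_coord V W \<phi>"])
  also have "\<dots> = qpair V W (iso_coord V W \<phi>) x"
    by (subst qpair_sym, rule qpair_cong) (simp add: iso_coord_a_map)
  also have "\<dots> = a_map V W (iso_coord V W \<phi>) x"
    using assms(2) by (simp add: a_map_apply)
  also have "\<dots> = \<phi> x"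
    using assms(1) by (simp add: a_map_iso_coord)
  finally show ?thesis .
qed

lemma iso_self_duality_sym:
  "\<phi> \<in> iso_obj V W \<Longrightarrow> \<psi> \<in> iso_obj V W \<Longrightarrow> iso_self_duality V W \<phi> \<psi> = iso_self_duality V W \<psi> \<phi>"
  by (simp add: iso_self_duality_def qpair_sym)

lemma iso_self_duality_add:
  "iso_self_duality V W (\<phi> + \<phi>') = iso_self_duality V W \<phi> + iso_self_duality V W \<phi>'"
  by (simp add: fun_eq_iff iso_self_duality_def iso_coord_add qpair_add_left)

lemma iso_self_duality_in_dual: "iso_self_duality V W \<phi> \<in> dual (iso_obj V W)"
  using f2space_iso_obj[of V W]
  by (simp add: dual_def f2space_def iso_self_duality_def iso_coord_add qpair_add_right)

lemma inj_on_iso_self_duality: "inj_on (iso_self_duality V W) (iso_obj V W)"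
proof (rule inj_onI)
  fix \<phi> \<phi>'
  assume \<phi>: "\<phi> \<in> iso_obj V W" and \<phi>': "\<phi>' \<in> iso_obj V W"
    and eq: "iso_self_duality V W \<phi> = iso_self_duality V W \<phi>'"
  show "\<phi> = \<phi>'"
  proof
    fix x
    show "\<phi> x = \<phi>' x"
    proof (cases "x \<in> Qobj V W")
      case True
      then show ?thesis
        using eq iso_self_duality_a_map[OF \<phi> True] iso_self_duality_a_map[OF \<phi>' True] by simp
    next
      case False
      then show ?thesis
        using iso_obj_vanishes[OF \<phi>] iso_obj_vanishes[OF \<phi>'] by simp
    qed
  qed
qed

lemma dual_iso_obj_in_image:
  assumes \<theta>: "\<theta> \<in> dual (iso_obj V W)"
  shows "\<theta> \<in> iso_self_duality V W ` iso_obj V W"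
proof -
  define t where "t f = \<theta> (a_map V W (indicator {f}))" for f
  have "iso_self_duality V W (a_map V W t) = \<theta>"
  proof
    fix \<psi>
    show "iso_self_duality V W (a_map V W t) \<psi> = \<theta> \<psi>"
    proof (cases "\<psi> \<in> iso_obj V W")
      case True
      then obtain x where x: "x \<in> Qobj V W" "\<psi> = a_map V W x"
        by (rule iso_objE)
      have "iso_self_duality V W (a_map V W t) (a_map V W x) = qpair V W x t"
        using x(1) by (simp add: iso_self_duality_a_map iso_objI a_map_apply qpair_sym)
      also have "\<dots> = \<theta> (a_map V W x)"
        unfolding t_def by (rule dual_iso_obj_a_map[OF \<theta>, symmetric])
      finally show ?thesis
        using x(2) by simp
    next
      case False
      then show ?thesis
        using \<theta> by (simp add: iso_self_duality_def dual_def)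
    qed
  qed
  then show ?thesis
    by (rule image_eqI[OF sym iso_objI])
qed

lemma bij_betw_iso_self_duality:
  "bij_betw (iso_self_duality V W) (iso_obj V W) (dual (iso_obj V W))"
  unfolding bij_betw_def
  using inj_on_iso_self_duality iso_self_duality_in_dual dual_iso_obj_in_image by blast

lemma DQmor_iso_obj:
  "R \<in> span_hom W X \<Longrightarrow> \<phi> \<in> iso_obj V W \<Longrightarrow> DQmor V W X R \<phi> \<in> iso_obj V X"
  by (auto elim!: iso_objE simp: DQmor_a_map iso_objI)

lemma iso_self_duality_natural:
  assumes R: "R \<in> span_hom W X" and \<phi>: "\<phi> \<in> iso_obj V W"
  shows "iso_self_duality V X (iso_mor V W X R \<phi>)
         = Dmor (iso_obj V) (iso_mor V) W X R (iso_self_duality V W \<phi>)"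
proof
  fix \<psi>
  show "iso_self_duality V X (iso_mor V W X R \<phi>) \<psi>
        = Dmor (iso_obj V) (iso_mor V) W X R (iso_self_duality V W \<phi>) \<psi>"
  proof (cases "\<psi> \<in> iso_obj V X")
    case True
    then obtain x where x: "x \<in> Qobj V X" "\<psi> = a_map V X x"
      by (rule iso_objE)
    have R': "converse R \<in> span_hom X W"
      using R by (rule converse_span_hom)
    have "iso_self_duality V X (iso_mor V W X R \<phi>) \<psi> = \<phi> (Qmor V X W (converse R) x)"
      using x DQmor_iso_obj[OF R \<phi>]
      by (simp add: iso_self_duality_a_map iso_mor_def DQmor_def Dmor_def dualmap_def)
    also have "\<dots> = Dmor (iso_obj V) (iso_mor V) W X R (iso_self_duality V W \<phi>) \<psi>"
      using True x \<phi> Qmor_in_Qobj[OF R']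
      by (simp add: Dmor_def dualmap_def iso_mor_def DQmor_a_map[OF R'] iso_self_duality_a_map)
    finally show ?thesis .
  next
    case False
    then show ?thesis
      by (simp add: iso_self_duality_def Dmor_def dualmap_def)
  qed
qed

lemma is_nat_iso_iso_self_duality:
  "is_nat_iso (iso_obj V) (iso_mor V) (Dobj (iso_obj V)) (Dmor (iso_obj V) (iso_mor V))
     (iso_self_duality V)"
  unfolding is_nat_iso_def f2linear_def Dobj_def
  by (simp add: bij_betw_iso_self_duality iso_self_duality_in_dual iso_self_duality_add
      iso_self_duality_natural)

lemma iso_self_duality_self_adjoint:
  assumes "\<phi> \<in> iso_obj V W"
  shows "iso_self_duality V W \<phi>
         = Dnat (iso_obj V) (iso_self_duality V) W (eta (iso_obj V) W \<phi>)"
proof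
  fix \<psi>
  show "iso_self_duality V W \<phi> \<psi> = Dnat (iso_obj V) (iso_self_duality V) W (eta (iso_obj V) W \<phi>) \<psi>"
  proof (cases "\<psi> \<in> iso_obj V W")
    case True
    then show ?thesis
      using assms iso_self_duality_in_dual[of V W \<psi>]
      by (simp add: Dnat_def dualmap_def eta_def iso_self_duality_sym)
  qed (simp add: iso_self_duality_def Dnat_def dualmap_def)
qed

theorem proposition4p28:
  assumes "V \<in> qobj"
  shows "\<exists>\<gamma>. is_nat_iso (iso_obj V) (iso_mor V) (Dobj (iso_obj V)) (Dmor (iso_obj V) (iso_mor V)) \<gamma>
            \<and> (\<forall>W\<in>qobj. \<forall>x\<in>iso_obj V W.
                  \<gamma> W x = Dnat (iso_obj V) \<gamma> W (eta (iso_obj V) W x))"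
  by (intro exI[of _ "iso_self_duality V"] conjI ballI
      is_nat_iso_iso_self_duality iso_self_duality_self_adjoint)

end
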